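(* Assume $a,a'\in[0.4,0.58]$ and $c,c'>0$. Then $$\big\|\log|T_{a,b,c}'|-\log|T_{a',b',c'}'|\big\|_{L^1([0,1])}\le|a-a'|\,(3-2\log|a-a'|)+0.7\,\frac{|c-c'|}{\min(c,c')}.$$
   Context: $T_{a,b,c}(x)=(a+(x-\tfrac18)^{1/3})e^{-x}+b$ for $0\le x\le0.3$ and $T_{a,b,c}(x)=c(10xe^{-10x/3})^{19}+b$ for $0.3\le x\le1$, with $(\cdot)^{1/3}$ the real cube root; $T'_{a,b,c}$ denotes its derivative where it exists (almost everywhere). *)

theory Defs
  imports "HOL-Analysis.Analysis"
begin

text \<open>The map T_{a,b,c}; the two pieces agree on their overlap convention at x = 0.3
  only up to a null set, which is irrelevant for the L1 statement.\<close>
definition T :: "real \<Rightarrow> real \<Rightarrow> real \<Rightarrow> real \<Rightarrow> real" where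
  "T a b c x = (if x \<le> 3/10 then (a + root 3 (x - 1/8)) * exp (- x) + b
                else c * (10 * x * exp (- 10 * x / 3)) ^ 19 + b)"

end

theory Submission
  imports Defs
begin

text \<open>For x < 3/10 and x \<noteq> 1/8 the derivative is T' x = exp(-x) (g x - a) with
  g x = 1/(3 r^2) - r, r the cube root of x - 1/8, so the integrand there is
  |ln|g x - a| - ln|g x - a'||. Left of 1/8 we have g \<ge> 4/3, far away from a, a' \<le> 0.58, and
  the integrand is at most (4/3)|a - a'|. On (1/8, 3/10] the function g decreases with slope at
  least 4, so |g x - a| \<ge> 4|x - p| for a crossing point p, and the two logarithmic singularities
  at the crossing points of a and a' integrate to at most 2|a - a'|(1 - ln|a - a'|). Right of
  3/10 the integrand is the constant |ln c - ln c'| \<le> |c - c'| / min c c'.\<close>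

lemma abs_ln_diff_le:
  fixes u v :: real
  assumes "0 < u" "0 < v"
  shows "\<bar>ln u - ln v\<bar> \<le> \<bar>u - v\<bar> / min u v"
proof -
  have *: "ln x - ln y \<le> (x - y) / y" if "0 < y" "y \<le> x" for x y :: real
  proof -
    have "ln x - ln y = ln (x / y)" using that by (simp add: ln_div)
    also have "\<dots> \<le> x / y - 1" using that by (intro ln_le_minus_one) simp
    also have "\<dots> = (x - y) / y" using that by (simp add: field_simps)
    finally show ?thesis .
  qed
  show ?thesis
  proof (cases "v \<le> u")
    case True
    then show ?thesis using *[of v u] assms by (simp add: min_def)
  next
    case False
    then show ?thesis using *[of u v] assms by (simp add: min_def abs_minus_commute)
  qed
qed

lemma ln_le_neg_one_if_le_quarter:
  fixes d :: real
  assumes "0 < d" "d \<le> 1/4"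
  shows "ln d \<le> -1"
proof -
  have "exp 1 \<le> (4::real)" using exp_le by simp
  then have "1 \<le> ln (4::real)" by (metis ln_exp ln_le_cancel_iff exp_gt_zero zero_less_numeral)
  moreover have "ln d \<le> ln (1/4)" using assms by simp
  ultimately show ?thesis by (simp add: ln_div)
qed

subsection \<open>Integrating two logarithmic singularities\<close>

text \<open>With d = |a - a'| and y at distance at least 4 s from a, the share of the log term at a in
  |ln|y - a| - ln|y - a'|| is at most gap_density d s: a square-root majorant of -ln near the
  singularity (4 s < d), the Lipschitz bound d / (4 s) away from it.\<close>

definition gap_density :: "real \<Rightarrow> real \<Rightarrow> real" where
  "gap_density d s = (if 4 * s < d then - ln d - 2 + sqrt d / sqrt s else d / (4 * s))"

definition gap_primitive :: "real \<Rightarrow> real \<Rightarrow> real" where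
  "gap_primitive d t = (if 4 * t \<le> d then (- ln d - 2) * t + 2 * sqrt d * sqrt t
     else d * (2 - ln d) / 4 + d / 4 * (ln (4 * t) - ln d))"

definition gap_antideriv :: "real \<Rightarrow> real \<Rightarrow> real \<Rightarrow> real" where
  "gap_antideriv d p x = (if x \<le> p then - gap_primitive d (p - x) else gap_primitive d (x - p))"

lemma gap_density_near:
  assumes "0 < s" "4 * s < d"
  shows "gap_density d s = - ln d - 2 + 2 * sqrt (d / (4 * s))"
  using assms by (simp add: gap_density_def real_sqrt_divide real_sqrt_mult)

lemma one_le_gap_density:
  assumes "0 < s" "4 * s < d" "d \<le> 1/4"
  shows "1 \<le> gap_density d s"
proof -
  have "1 \<le> sqrt (d / (4 * s))" using assms by simp
  then show ?thesis
    using gap_density_near[OF assms(1,2)] ln_le_neg_one_if_le_quarter[of d] assms by linarith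
qed

lemma neg_ln_le_gap_density:
  assumes "0 < s" "4 * s \<le> t" "t < d"
  shows "- ln t \<le> gap_density d s"
proof -
  define z where "z = sqrt (d / (4 * s))"
  have "1 \<le> z" unfolding z_def using assms by simp
  then have "ln (z\<^sup>2) \<le> 2 * (z - 1)" using ln_le_minus_one[of z] by (simp add: ln_realpow)
  moreover have "ln (z\<^sup>2) = ln d - ln (4 * s)" unfolding z_def using assms by (simp add: ln_div)
  moreover have "ln (4 * s) \<le> ln t" using assms by simp
  moreover have "gap_density d s = - ln d - 2 + 2 * z" unfolding z_def using gap_density_near assms by simp
  ultimately show ?thesis by argo
qed

lemma gap_density_nonneg:
  assumes "0 < s" "0 < d" "d \<le> 1/4"
  shows "0 \<le> gap_density d s"
  using one_le_gap_density[of s d] assms by (cases "4 * s < d") (auto simp: gap_density_def)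

lemma div_le_gap_density:
  assumes "0 < s" "4 * s \<le> t" "0 < d" "d \<le> 1/4" "d \<le> t"
  shows "d / t \<le> gap_density d s"
proof (cases "4 * s < d")
  case True
  moreover have "d / t \<le> 1" using assms by simp
  ultimately show ?thesis using one_le_gap_density[of s d] assms by linarith
next
  case False
  then show ?thesis using assms by (simp add: gap_density_def frac_le)
qed

lemma abs_ln_gap_le_right:
  fixes y a a' s s' :: real
  assumes aa: "a < a'" "a' - a \<le> 1/4" and y: "a < y" "y \<noteq> a'"
    and s: "0 < s" "4 * s \<le> \<bar>y - a\<bar>" and s': "0 < s'" "4 * s' \<le> \<bar>y - a'\<bar>"
  shows "\<bar>ln \<bar>y - a\<bar> - ln \<bar>y - a'\<bar>\<bar> \<le> gap_density (a' - a) s + gap_density (a' - a) s'"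
proof -
  define d where "d = a' - a"
  have d: "0 < d" "d \<le> 1/4" using aa by (auto simp: d_def)
  have n: "0 \<le> gap_density d s" "0 \<le> gap_density d s'"
    using gap_density_nonneg d s s' by auto
  consider "a' + d \<le> y" | "a' < y" "y < a' + d" | "y < a'" using y by linarith
  then have "\<bar>ln \<bar>y - a\<bar> - ln \<bar>y - a'\<bar>\<bar> \<le> gap_density d s + gap_density d s'"
  proof cases
    case 1
    have p: "0 < y - a'" "y - a' < y - a" using 1 d by (auto simp: d_def)
    have "\<bar>ln (y - a) - ln (y - a')\<bar> \<le> d / (y - a')"
      using abs_ln_diff_le[of "y - a" "y - a'"] p by (simp add: d_def)
    also have "\<dots> \<le> gap_density d s'" using div_le_gap_density[OF s'(1) _ d] s' p 1 by simp
    finally show ?thesis using p n by simp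
  next
    case 2
    have p: "0 < y - a'" "y - a' < y - a" "y - a \<le> 1" using 2 d by (auto simp: d_def)
    have "- ln (y - a') \<le> gap_density d s'"
      using neg_ln_le_gap_density[OF s'(1)] s' p 2 by (simp add: d_def)
    moreover have "ln (y - a) \<le> 0" "ln (y - a') \<le> ln (y - a)" using p by auto
    moreover have "\<bar>y - a\<bar> = y - a" "\<bar>y - a'\<bar> = y - a'" using p by auto
    ultimately show ?thesis using n by simp
  next
    case 3
    have p: "0 < y - a" "y - a < d" "0 < a' - y" "a' - y < d" using 3 y by (auto simp: d_def)
    have "- ln (y - a) \<le> gap_density d s" using neg_ln_le_gap_density[OF s(1)] s p by simp
    moreover have "- ln (a' - y) \<le> gap_density d s'" using neg_ln_le_gap_density[OF s'(1)] s' p 3 by simp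
    moreover have "ln (y - a) \<le> 0" "ln (a' - y) \<le> 0" using p d by auto
    moreover have "\<bar>ln \<bar>y - a\<bar> - ln \<bar>y - a'\<bar>\<bar> = \<bar>ln (y - a) - ln (a' - y)\<bar>"
      using p by (simp add: abs_minus_commute)
    ultimately show ?thesis by linarith
  qed
  then show ?thesis by (simp add: d_def)
qed

lemma abs_ln_gap_le:
  fixes y a a' s s' :: real
  assumes aa: "a < a'" "a' - a \<le> 1/4" and y: "y \<noteq> a" "y \<noteq> a'"
    and s: "0 < s" "4 * s \<le> \<bar>y - a\<bar>" and s': "0 < s'" "4 * s' \<le> \<bar>y - a'\<bar>"
  shows "\<bar>ln \<bar>y - a\<bar> - ln \<bar>y - a'\<bar>\<bar> \<le> gap_density (a' - a) s + gap_density (a' - a) s'"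
proof (cases "a < y")
  case True
  then show ?thesis using abs_ln_gap_le_right[OF aa _ _ s s'] y by simp
next
  case False
  \<comment> \<open>reflect y \<mapsto> -y, which swaps the roles of a and a'\<close>
  have "\<bar>ln \<bar>-y - -a'\<bar> - ln \<bar>-y - -a\<bar>\<bar> \<le> gap_density (a' - a) s' + gap_density (a' - a) s"
    using abs_ln_gap_le_right[of "-a'" "-a" "-y" s' s] aa y s s' False
    by (simp add: abs_minus_commute)
  then show ?thesis by (simp add: abs_minus_commute)
qed

lemma continuous_on_gap_primitive:
  assumes "0 < d"
  shows "continuous_on {0..} (gap_primitive d)"
  unfolding gap_primitive_def
proof (rule continuous_on_cases_le)
  show "continuous_on {t \<in> {0..}. 4 * t \<le> d} (\<lambda>t. (- ln d - 2) * t + 2 * sqrt d * sqrt t)"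
    by (intro continuous_intros)
  show "continuous_on {t \<in> {0..}. d \<le> 4 * t} (\<lambda>t. d * (2 - ln d) / 4 + d / 4 * (ln (4 * t) - ln d))"
    using assms by (intro continuous_intros) auto
  show "continuous_on {0..} (\<lambda>t::real. 4 * t)" by (intro continuous_intros)
  fix t :: real assume "t \<in> {0..}" "4 * t = d"
  moreover have "sqrt d * sqrt (d / 4) = d / 2" using assms by (simp add: real_sqrt_divide)
  ultimately show "(- ln d - 2) * t + 2 * sqrt d * sqrt t = d * (2 - ln d) / 4 + d / 4 * (ln (4 * t) - ln d)"
    by (auto simp: algebra_simps)
qed

lemma gap_primitive_has_derivative:
  assumes "0 < d" "0 < t" "4 * t \<noteq> d"
  shows "(gap_primitive d has_real_derivative gap_density d t) (at t)"
proof (cases "4 * t < d")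
  case True
  have "((\<lambda>t. (- ln d - 2) * t + 2 * sqrt d * sqrt t) has_real_derivative gap_density d t) (at t)"
    by (rule derivative_eq_intros refl | use assms True in \<open>simp add: gap_density_def field_simps\<close>)+
  then show ?thesis
    by (rule has_field_derivative_transform_within_open[where S="{..<d/4}"])
       (use True in \<open>auto simp: gap_primitive_def\<close>)
next
  case False
  then have far: "d < 4 * t" using assms by simp
  have "((\<lambda>t. d * (2 - ln d) / 4 + d / 4 * (ln (4 * t) - ln d)) has_real_derivative gap_density d t) (at t)"
    by (rule derivative_eq_intros refl | use assms far in \<open>simp add: gap_density_def field_simps\<close>)+
  then show ?thesis
    by (rule has_field_derivative_transform_within_open[where S="{d/4<..}"])
       (use far in \<open>auto simp: gap_primitive_def\<close>)
qed

lemma continuous_on_gap_antideriv: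
  assumes "0 < d"
  shows "continuous_on UNIV (gap_antideriv d p)"
  unfolding gap_antideriv_def
proof (rule continuous_on_cases_le)
  note c = continuous_on_gap_primitive[OF assms]
  show "continuous_on {x \<in> UNIV. x \<le> p} (\<lambda>x. - gap_primitive d (p - x))"
    by (intro continuous_intros continuous_on_compose2[OF c]) auto
  show "continuous_on {x \<in> UNIV. p \<le> x} (\<lambda>x. gap_primitive d (x - p))"
    by (intro continuous_intros continuous_on_compose2[OF c]) auto
qed (use assms in \<open>auto simp: gap_primitive_def\<close>)

lemma gap_antideriv_has_derivative:
  assumes "0 < d" "x \<noteq> p" "x \<noteq> p - d/4" "x \<noteq> p + d/4"
  shows "(gap_antideriv d p has_real_derivative gap_density d \<bar>x - p\<bar>) (at x)"
proof (cases "x < p")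
  case True
  have "(gap_primitive d has_real_derivative gap_density d (p - x)) (at (p - x))"
    by (rule gap_primitive_has_derivative) (use assms True in auto)
  moreover have "((\<lambda>x. p - x) has_real_derivative -1) (at x)" by (auto intro!: derivative_eq_intros)
  ultimately have "((\<lambda>x. gap_primitive d (p - x)) has_real_derivative gap_density d (p - x) * -1) (at x)"
    by (rule DERIV_chain2)
  from DERIV_minus[OF this]
  have "((\<lambda>x. - gap_primitive d (p - x)) has_real_derivative gap_density d \<bar>x - p\<bar>) (at x)"
    using True by simp
  then show ?thesis
    by (rule has_field_derivative_transform_within_open[where S="{..<p}"])
       (use True in \<open>auto simp: gap_antideriv_def\<close>)
next
  case False
  then have right: "p < x" using assms by simp
  have "(gap_primitive d has_real_derivative gap_density d (x - p)) (at (x - p))"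
    by (rule gap_primitive_has_derivative) (use assms right in auto)
  moreover have "((\<lambda>x. x - p) has_real_derivative 1) (at x)" by (auto intro!: derivative_eq_intros)
  ultimately have "((\<lambda>x. gap_primitive d (x - p)) has_real_derivative gap_density d (x - p) * 1) (at x)"
    by (rule DERIV_chain2)
  then have "((\<lambda>x. gap_primitive d (x - p)) has_real_derivative gap_density d \<bar>x - p\<bar>) (at x)"
    using right by simp
  then show ?thesis
    by (rule has_field_derivative_transform_within_open[where S="{p<..}"])
       (use right in \<open>auto simp: gap_antideriv_def\<close>)
qed

lemma has_integral_gap_density:
  assumes "0 < d" "l \<le> u"
  shows "((\<lambda>x. gap_density d \<bar>x - p\<bar>) has_integral (gap_antideriv d p u - gap_antideriv d p l)) {l..u}"
proof (rule fundamental_theorem_of_calculus_interior_strong[where S="{p, p - d/4, p + d/4}"])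
  show "continuous_on {l..u} (gap_antideriv d p)"
    using continuous_on_gap_antideriv[OF assms(1)] by (rule continuous_on_subset) simp
  fix x assume "x \<in> {l<..<u} - {p, p - d/4, p + d/4}"
  then show "(gap_antideriv d p has_vector_derivative gap_density d \<bar>x - p\<bar>) (at x)"
    using gap_antideriv_has_derivative[OF assms(1), of x p]
    by (simp add: has_real_derivative_iff_has_vector_derivative)
qed (use assms in auto)

lemma gap_primitive_mono_near:
  assumes d: "0 < d" "d \<le> 1" and tu: "0 \<le> t" "t \<le> u" "4 * u \<le> d"
  shows "gap_primitive d t \<le> gap_primitive d u"
proof -
  define c where "c = - ln d - 2"
  define \<alpha> where "\<alpha> = sqrt t"
  define \<beta> where "\<beta> = sqrt u"
  have ab: "0 \<le> \<alpha>" "\<alpha> \<le> \<beta>" using tu by (auto simp: \<alpha>_def \<beta>_def)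
  have "sqrt (4 * u) \<le> sqrt d" using tu by simp
  then have b2: "2 * \<beta> \<le> sqrt d" by (simp add: \<beta>_def real_sqrt_mult)
  have tt: "t = \<alpha>\<^sup>2" "u = \<beta>\<^sup>2" using tu by (auto simp: \<alpha>_def \<beta>_def)
  have key: "0 \<le> c * (\<alpha> + \<beta>) + 2 * sqrt d"
  proof (cases "0 \<le> c")
    case True then show ?thesis using ab d by (intro add_nonneg_nonneg mult_nonneg_nonneg) auto
  next
    case False
    have "c * sqrt d \<le> c * (\<alpha> + \<beta>)" using False ab b2 by (intro mult_left_mono_neg) auto
    moreover have "0 \<le> (c + 2) * sqrt d" unfolding c_def using d by (intro mult_nonneg_nonneg) auto
    ultimately show ?thesis by (simp add: algebra_simps)
  qed
  have "gap_primitive d u - gap_primitive d t = (\<beta> - \<alpha>) * (c * (\<alpha> + \<beta>) + 2 * sqrt d)"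
    using tu ab
    by (simp add: gap_primitive_def c_def \<alpha>_def[symmetric] \<beta>_def[symmetric] tt power2_eq_square algebra_simps)
  moreover have "0 \<le> (\<beta> - \<alpha>) * (c * (\<alpha> + \<beta>) + 2 * sqrt d)" using ab key by simp
  ultimately show ?thesis by simp
qed

lemma gap_primitive_mono:
  assumes d: "0 < d" "d \<le> 1" and tu: "0 \<le> t" "t \<le> u"
  shows "gap_primitive d t \<le> gap_primitive d u"
proof (cases "4 * u \<le> d")
  case True then show ?thesis using gap_primitive_mono_near[OF d tu] by simp
next
  case False
  then have far: "gap_primitive d u = d * (2 - ln d) / 4 + d / 4 * (ln (4 * u) - ln d)"
    by (simp add: gap_primitive_def)
  show ?thesis
  proof (cases "4 * t \<le> d")
    case True
    have "gap_primitive d t \<le> gap_primitive d (d/4)"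
      using gap_primitive_mono_near[OF d tu(1), of "d/4"] True by simp
    also have "\<dots> = d * (2 - ln d) / 4"
      using d by (simp add: gap_primitive_def real_sqrt_divide algebra_simps)
    also have "\<dots> \<le> gap_primitive d u" unfolding far using False d by simp
    finally show ?thesis .
  next
    case False
    then show ?thesis using d tu \<open>\<not> 4 * u \<le> d\<close>
      by (simp add: far gap_primitive_def mult_left_mono)
  qed
qed

lemma gap_primitive_le:
  assumes "0 < d" "d \<le> 1/4" "0 \<le> t" "t \<le> 1/4"
  shows "gap_primitive d t \<le> d * (1 - ln d) / 2"
proof -
  have "gap_primitive d t \<le> gap_primitive d (1/4)" using gap_primitive_mono assms by simp
  also have "\<dots> = d * (1 - ln d) / 2" using assms by (simp add: gap_primitive_def field_simps)
  finally show ?thesis .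
qed

lemma gap_antideriv_diff_le:
  assumes d: "0 < d" "d \<le> 1/4" and p: "l \<le> p" "p \<le> u" "u - l \<le> 1/4"
  shows "gap_antideriv d p u - gap_antideriv d p l \<le> d * (1 - ln d)"
proof -
  have "gap_antideriv d p u = gap_primitive d (u - p)"
    using p d by (auto simp: gap_antideriv_def gap_primitive_def)
  moreover have "gap_antideriv d p l = - gap_primitive d (p - l)"
    using p by (simp add: gap_antideriv_def)
  moreover have "gap_primitive d (u - p) \<le> d * (1 - ln d) / 2" "gap_primitive d (p - l) \<le> d * (1 - ln d) / 2"
    using gap_primitive_le[OF d] p by auto
  ultimately show ?thesis by simp
qed

lemma dominated_integrable_le:
  fixes f g :: "real \<Rightarrow> real"
  assumes f: "f \<in> borel_measurable borel" and g: "(g has_integral I) {l..u}" and S: "finite S"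
    and bound: "\<And>x. x \<in> {l..u} - S \<Longrightarrow> \<bar>f x\<bar> \<le> g x"
  shows "f integrable_on {l..u} \<and> integral {l..u} f \<le> I"
proof -
  define f' where "f' x = (if x \<in> S then 0 else f x)" for x
  define g' where "g' x = (if x \<in> S then 0 else g x)" for x
  have g': "(g' has_integral I) {l..u}"
    by (rule has_integral_spike_finite[OF S _ g]) (simp add: g'_def)
  have "f \<in> borel_measurable lebesgue" using f by (simp add: measurable_completion)
  then have "f measurable_on {l..u}"
    by (simp add: measurable_on_iff_borel_measurable measurable_restrict_space1)
  then have f'm: "f' measurable_on {l..u}"
    by (rule measurable_on_spike[OF _ negligible_finite[OF S]]) (simp add: f'_def)
  have bound': "\<bar>f' x\<bar> \<le> g' x" if "x \<in> {l..u}" for x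
    using bound[of x] that by (auto simp: f'_def g'_def)
  have f': "f' integrable_on {l..u}"
    by (rule measurable_bounded_by_integrable_imp_integrable_real[where g=g'])
       (use f'm g' bound' in \<open>auto simp: measurable_on_iff_borel_measurable\<close>)
  have "integral {l..u} f' \<le> integral {l..u} g'"
    by (rule integral_le[OF f']) (use g' bound' in \<open>auto intro: abs_le_D1\<close>)
  moreover have "integral {l..u} g' = I" using g' by (rule integral_unique)
  moreover have "f integrable_on {l..u}"
    by (rule integrable_spike_finite[OF S _ f']) (simp add: f'_def)
  moreover have "integral {l..u} f = integral {l..u} f'"
    by (rule integral_spike[OF negligible_finite[OF S]]) (simp add: f'_def)
  ultimately show ?thesis by simp
qed

lemma integral_abs_ln_gap_le_ordered:
  fixes f :: "real \<Rightarrow> real"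
  assumes f: "f \<in> borel_measurable borel" and lu: "l \<le> u" "u - l \<le> 1/4"
    and aa: "a < a'" "a' - a \<le> 1/4"
    and p: "p \<in> {l..u}" "\<And>x. x \<in> {l<..<u} \<Longrightarrow> 4 * \<bar>x - p\<bar> \<le> \<bar>f x - a\<bar>"
    and p': "p' \<in> {l..u}" "\<And>x. x \<in> {l<..<u} \<Longrightarrow> 4 * \<bar>x - p'\<bar> \<le> \<bar>f x - a'\<bar>"
  shows "(\<lambda>x. \<bar>ln \<bar>f x - a\<bar> - ln \<bar>f x - a'\<bar>\<bar>) integrable_on {l..u} \<and>
         integral {l..u} (\<lambda>x. \<bar>ln \<bar>f x - a\<bar> - ln \<bar>f x - a'\<bar>\<bar>) \<le> 2 * (a' - a) * (1 - ln (a' - a))"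
proof -
  define d where "d = a' - a"
  have d: "0 < d" "d \<le> 1/4" using aa by (auto simp: d_def)
  let ?A = "\<lambda>p. gap_antideriv d p u - gap_antideriv d p l"
  have "(\<lambda>x. \<bar>ln \<bar>f x - a\<bar> - ln \<bar>f x - a'\<bar>\<bar>) integrable_on {l..u} \<and>
        integral {l..u} (\<lambda>x. \<bar>ln \<bar>f x - a\<bar> - ln \<bar>f x - a'\<bar>\<bar>) \<le> ?A p + ?A p'"
  proof (rule dominated_integrable_le[where S="{l, u, p, p'}"])
    show "(\<lambda>x. \<bar>ln \<bar>f x - a\<bar> - ln \<bar>f x - a'\<bar>\<bar>) \<in> borel_measurable borel" using f by measurable
    show "((\<lambda>x. gap_density d \<bar>x - p\<bar> + gap_density d \<bar>x - p'\<bar>) has_integral ?A p + ?A p') {l..u}"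
      by (intro has_integral_add has_integral_gap_density d lu)
    fix x assume x: "x \<in> {l..u} - {l, u, p, p'}"
    then have s: "0 < \<bar>x - p\<bar>" "4 * \<bar>x - p\<bar> \<le> \<bar>f x - a\<bar>"
      and s': "0 < \<bar>x - p'\<bar>" "4 * \<bar>x - p'\<bar> \<le> \<bar>f x - a'\<bar>" using p p' by auto
    then have "f x \<noteq> a" "f x \<noteq> a'" by auto
    then show "\<bar>\<bar>ln \<bar>f x - a\<bar> - ln \<bar>f x - a'\<bar>\<bar>\<bar> \<le> gap_density d \<bar>x - p\<bar> + gap_density d \<bar>x - p'\<bar>"
      using abs_ln_gap_le[OF aa _ _ s s'] by (simp add: d_def)
  qed simp
  moreover have "?A p \<le> d * (1 - ln d)" "?A p' \<le> d * (1 - ln d)"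
    using gap_antideriv_diff_le[OF d] p p' lu by auto
  ultimately show ?thesis unfolding d_def by argo
qed

lemma integral_abs_ln_gap_le:
  fixes f :: "real \<Rightarrow> real"
  assumes f: "f \<in> borel_measurable borel" and lu: "l \<le> u" "u - l \<le> 1/4"
    and aa: "\<bar>a - a'\<bar> \<le> 1/4"
    and p: "p \<in> {l..u}" "\<And>x. x \<in> {l<..<u} \<Longrightarrow> 4 * \<bar>x - p\<bar> \<le> \<bar>f x - a\<bar>"
    and p': "p' \<in> {l..u}" "\<And>x. x \<in> {l<..<u} \<Longrightarrow> 4 * \<bar>x - p'\<bar> \<le> \<bar>f x - a'\<bar>"
  shows "(\<lambda>x. \<bar>ln \<bar>f x - a\<bar> - ln \<bar>f x - a'\<bar>\<bar>) integrable_on {l..u} \<and>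
         integral {l..u} (\<lambda>x. \<bar>ln \<bar>f x - a\<bar> - ln \<bar>f x - a'\<bar>\<bar>) \<le> 2 * \<bar>a - a'\<bar> * (1 - ln \<bar>a - a'\<bar>)"
proof -
  consider "a < a'" | "a = a'" | "a' < a" by linarith
  then show ?thesis
  proof cases
    case 1
    then show ?thesis using integral_abs_ln_gap_le_ordered[OF f lu _ _ p p'] aa by simp
  next
    case 2
    then show ?thesis using integrable_0 by simp
  next
    case 3
    then show ?thesis using integral_abs_ln_gap_le_ordered[OF f lu _ _ p' p] aa
      by (simp add: abs_minus_commute)
  qed
qed

subsection \<open>The two branches of T\<close>

definition left_profile :: "real \<Rightarrow> real" where
  "left_profile x = 1 / (3 * (root 3 (x - 1/8))\<^sup>2) - root 3 (x - 1/8)"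

definition right_profile :: "real \<Rightarrow> real" where
  "right_profile x = 19 * (10 * x * exp (- 10 * x / 3)) ^ 18 * (10 * exp (- 10 * x / 3) * (1 - 10 * x / 3))"

lemma deriv_T_left:
  assumes "x < 3/10" "x \<noteq> 1/8"
  shows "deriv (T a b c) x = exp (- x) * (left_profile x - a)"
proof -
  have r: "root 3 (x - 1/8) \<noteq> 0" using assms by simp
  have "(root 3 has_real_derivative inverse (3 * root 3 (x - 1/8) ^ 2)) (at (x - 1/8))"
    by (rule DERIV_real_root_generic) (use assms in auto)
  moreover have "((\<lambda>x. x - 1/8) has_real_derivative 1) (at x)" by (auto intro!: derivative_eq_intros)
  ultimately have cbrt: "((\<lambda>x. root 3 (x - 1/8)) has_real_derivative inverse (3 * root 3 (x - 1/8) ^ 2) * 1) (at x)"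
    by (rule DERIV_chain2)
  have "((\<lambda>x. (a + root 3 (x - 1/8)) * exp (- x) + b) has_real_derivative
          exp (- x) * (left_profile x - a)) (at x)"
    by (rule derivative_eq_intros cbrt refl | simp add: left_profile_def field_simps r)+
  then have "(T a b c has_real_derivative exp (- x) * (left_profile x - a)) (at x)"
    by (rule has_field_derivative_transform_within_open[where S="{..<3/10}"])
       (use assms in \<open>auto simp: T_def\<close>)
  then show ?thesis by (rule DERIV_imp_deriv)
qed

lemma deriv_T_right:
  assumes "3/10 < x"
  shows "deriv (T a b c) x = c * right_profile x"
proof -
  have "((\<lambda>x. c * (10 * x * exp (- 10 * x / 3)) ^ 19 + b) has_real_derivative c * right_profile x) (at x)"
    unfolding right_profile_def by (rule derivative_eq_intros refl | simp add: field_simps)+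
  then have "(T a b c has_real_derivative c * right_profile x) (at x)"
    by (rule has_field_derivative_transform_within_open[where S="{3/10<..}"])
       (use assms in \<open>auto simp: T_def\<close>)
  then show ?thesis by (rule DERIV_imp_deriv)
qed

lemma ln_abs_deriv_T_left:
  assumes "x < 3/10" "x \<noteq> 1/8" "left_profile x \<noteq> a"
  shows "ln \<bar>deriv (T a b c) x\<bar> = - x + ln \<bar>left_profile x - a\<bar>"
  using assms by (simp add: deriv_T_left abs_mult ln_mult)

lemma ln_abs_deriv_T_right:
  assumes "3/10 < x" "0 < c"
  shows "ln \<bar>deriv (T a b c) x\<bar> = ln c + ln \<bar>right_profile x\<bar>"
  using assms by (simp add: deriv_T_right abs_mult ln_mult right_profile_def)

lemma cube_root_profile_slope:
  fixes r r' :: real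
  assumes "0 < r" "r \<le> r'" "r' \<le> 14/25"
  shows "4 * (r'^3 - r^3) \<le> (1/(3*r\<^sup>2) - r) - (1/(3*r'\<^sup>2) - r')"
proof -
  define s :: real where "s = 14/25"
  have rs: "r \<le> s" "r' \<le> s" using assms by (auto simp: s_def)
  have sq: "r\<^sup>2 \<le> s\<^sup>2" "r'\<^sup>2 \<le> s\<^sup>2" using rs assms by (auto intro!: power_mono)
  have "r * r' \<le> s * s" "r * r'\<^sup>2 \<le> s * s\<^sup>2" "r\<^sup>2 * r' \<le> s\<^sup>2 * s"
    using rs sq assms by (auto intro!: mult_mono)
  then have cube: "r * r' \<le> s\<^sup>2" "r * r'\<^sup>2 \<le> s^3" "r\<^sup>2 * r' \<le> s^3"
    by (simp_all add: power2_eq_square power3_eq_cube)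
  have "4 * (r\<^sup>2 + r * r' + r'\<^sup>2) \<le> 4 * (3 * s\<^sup>2)" using sq cube by simp
  also have "\<dots> \<le> (1/s^3 + 1/s^3) / 3 + 1" by (simp add: s_def power2_eq_square power3_eq_cube)
  also have "\<dots> \<le> (1/(r * r'\<^sup>2) + 1/(r\<^sup>2 * r')) / 3 + 1"
    using cube assms by (intro add_mono divide_right_mono frac_le) auto
  finally have "(r' - r) * (4 * (r\<^sup>2 + r * r' + r'\<^sup>2)) \<le> (r' - r) * ((1/(r * r'\<^sup>2) + 1/(r\<^sup>2 * r')) / 3 + 1)"
    using assms by (intro mult_left_mono) auto
  moreover have "4 * (r'^3 - r^3) = (r' - r) * (4 * (r\<^sup>2 + r * r' + r'\<^sup>2))"
    by (simp add: algebra_simps power2_eq_square power3_eq_cube)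
  moreover have "(1/(3*r\<^sup>2) - r) - (1/(3*r'\<^sup>2) - r') = (r' - r) * ((1/(r * r'\<^sup>2) + 1/(r\<^sup>2 * r')) / 3 + 1)"
    using assms by (simp add: field_simps power2_eq_square)
  ultimately show ?thesis by simp
qed

lemma left_profile_slope:
  assumes "1/8 < x" "x \<le> x'" "x' \<le> 3/10"
  shows "4 * (x' - x) \<le> left_profile x - left_profile x'"
proof -
  have "root 3 (x' - 1/8) \<le> root 3 ((14/25)^3)" using assms by (simp add: power3_eq_cube)
  then have "root 3 (x' - 1/8) \<le> 14/25" by (simp add: odd_real_root_power_cancel)
  then have "4 * (root 3 (x' - 1/8) ^ 3 - root 3 (x - 1/8) ^ 3) \<le> left_profile x - left_profile x'"
    unfolding left_profile_def using assms by (intro cube_root_profile_slope) auto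
  then show ?thesis by (simp add: odd_real_root_pow)
qed

lemma left_profile_dist:
  assumes "1/8 < x" "x \<le> 3/10" "1/8 < x'" "x' \<le> 3/10"
  shows "4 * \<bar>x - x'\<bar> \<le> \<bar>left_profile x - left_profile x'\<bar>"
  using left_profile_slope[of x x'] left_profile_slope[of x' x] assms by (cases "x \<le> x'") auto

lemma left_profile_crossing:
  assumes "s \<le> 30"
  obtains p where "p \<in> {1/8..3/10}" "\<And>x. x \<in> {1/8<..3/10} \<Longrightarrow> 4 * \<bar>x - p\<bar> \<le> \<bar>left_profile x - s\<bar>"
proof (cases "s \<le> left_profile (3/10)")
  case True
  show ?thesis
  proof (rule that[of "3/10"])
    fix x :: real assume "x \<in> {1/8<..3/10}"
    then have "4 * (3/10 - x) \<le> left_profile x - left_profile (3/10)" by (intro left_profile_slope) auto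
    then show "4 * \<bar>x - 3/10\<bar> \<le> \<bar>left_profile x - s\<bar>" using True \<open>x \<in> {1/8<..3/10}\<close> by auto
  qed simp
next
  case False
  define x\<^sub>0 :: real where "x\<^sub>0 = 1/8 + 1/1000"
  have r\<^sub>0: "root 3 (x\<^sub>0 - 1/8) = 1/10"
    using odd_real_root_power_cancel[of 3 "1/10::real"] by (simp add: x\<^sub>0_def power3_eq_cube)
  have "left_profile x\<^sub>0 = 100/3 - 1/10" unfolding left_profile_def r\<^sub>0 by (simp add: power2_eq_square)
  moreover have "continuous_on {x\<^sub>0..3/10} left_profile"
    unfolding left_profile_def by (intro continuous_intros) (auto simp: x\<^sub>0_def)
  ultimately obtain p where p: "x\<^sub>0 \<le> p" "p \<le> 3/10" "left_profile p = s"
    using IVT2'[of left_profile "3/10" s x\<^sub>0] False assms by (auto simp: x\<^sub>0_def)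
  show ?thesis
    by (rule that[of p]) (use p left_profile_dist[of _ p] in \<open>auto simp: x\<^sub>0_def\<close>)
qed

lemma left_profile_ge:
  assumes "0 \<le> x" "x < 1/8"
  shows "4/3 \<le> left_profile x"
proof -
  define r where "r = root 3 (x - 1/8)"
  have "r < 0" unfolding r_def using assms by simp
  have "root 3 (1/8) = 1/2"
    using odd_real_root_power_cancel[of 3 "1/2::real"] by (simp add: power3_eq_cube)
  moreover have "root 3 (-1/8) \<le> r" unfolding r_def using assms by simp
  ultimately have "-1/2 \<le> r" using real_root_minus[of 3 "1/8"] by simp
  then have "(-r) * (-r) \<le> (1/2) * (1/2)" using \<open>r < 0\<close> by (intro mult_mono) auto
  then have "r\<^sup>2 \<le> 1/4" by (simp add: power2_eq_square)
  then have "4/3 \<le> 1 / (3 * r\<^sup>2)" using \<open>r < 0\<close> by (simp add: field_simps)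
  moreover have "left_profile x = 1 / (3 * r\<^sup>2) - r" by (simp add: left_profile_def r_def)
  ultimately show ?thesis using \<open>r < 0\<close> by linarith
qed

lemma left_profile_measurable: "left_profile \<in> borel_measurable borel"
  unfolding left_profile_def by measurable

lemma finite_left_profile_crossings:
  assumes "0 < s" "s < 4/3"
  shows "finite {x \<in> {0..3/10}. left_profile x = s}"
proof -
  have "inj_on left_profile {1/8<..3/10}"
    by (rule inj_onI) (use left_profile_dist in force)
  then have "finite (left_profile -` {s} \<inter> {1/8<..3/10})" by (intro finite_vimage_IntI) auto
  moreover have "{x \<in> {0..3/10}. left_profile x = s} \<subseteq> left_profile -` {s} \<inter> {1/8<..3/10}"
  proof
    fix x assume x: "x \<in> {x \<in> {0..3/10}. left_profile x = s}"
    have "x \<noteq> 1/8"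
    proof
      assume "x = 1/8"
      then have "left_profile (1/8) = s" using x by blast
      then show False using assms by (simp add: left_profile_def)
    qed
    moreover have "\<not> x < 1/8" using x assms left_profile_ge[of x] by auto
    ultimately show "x \<in> left_profile -` {s} \<inter> {1/8<..3/10}" using x by auto
  qed
  ultimately show ?thesis by (rule finite_subset[rotated])
qed

lemma integral_abs_ln_left_profile_initial:
  assumes a: "a \<le> 0.58" "a' \<le> 0.58"
  shows "(\<lambda>x. \<bar>ln \<bar>left_profile x - a\<bar> - ln \<bar>left_profile x - a'\<bar>\<bar>) integrable_on {0..1/8} \<and>
         integral {0..1/8} (\<lambda>x. \<bar>ln \<bar>left_profile x - a\<bar> - ln \<bar>left_profile x - a'\<bar>\<bar>) \<le> \<bar>a - a'\<bar> / 6"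
proof -
  define d where "d = \<bar>a - a'\<bar>"
  have "(\<lambda>x. \<bar>ln \<bar>left_profile x - a\<bar> - ln \<bar>left_profile x - a'\<bar>\<bar>) integrable_on {0..1/8} \<and>
        integral {0..1/8} (\<lambda>x. \<bar>ln \<bar>left_profile x - a\<bar> - ln \<bar>left_profile x - a'\<bar>\<bar>) \<le> (1/8) * (4 * d / 3)"
  proof (rule dominated_integrable_le[where S="{1/8}"])
    show "(\<lambda>x. \<bar>ln \<bar>left_profile x - a\<bar> - ln \<bar>left_profile x - a'\<bar>\<bar>) \<in> borel_measurable borel"
      using left_profile_measurable by measurable
    show "((\<lambda>x. 4 * d / 3) has_integral (1/8) * (4 * d / 3)) {0..1/8::real}"
      using has_integral_const_real[of "4 * d / 3" 0 "1/8::real"] by simp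
    fix x :: real assume "x \<in> {0..1/8} - {1/8}"
    then have "4/3 \<le> left_profile x" by (intro left_profile_ge) auto
    then have pos: "0 < left_profile x - a" "0 < left_profile x - a'"
      and far: "3/4 \<le> min (left_profile x - a) (left_profile x - a')" using a by auto
    have "\<bar>\<bar>ln \<bar>left_profile x - a\<bar> - ln \<bar>left_profile x - a'\<bar>\<bar>\<bar> \<le> d / min (left_profile x - a) (left_profile x - a')"
      using abs_ln_diff_le[OF pos] pos by (simp add: d_def abs_minus_commute[of a'])
    also have "\<dots> \<le> d / (3/4)" using far by (intro divide_left_mono) (auto simp: d_def)
    finally show "\<bar>\<bar>ln \<bar>left_profile x - a\<bar> - ln \<bar>left_profile x - a'\<bar>\<bar>\<bar> \<le> 4 * d / 3" by simp
  qed simp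
  then show ?thesis by (simp add: d_def)
qed

lemma integral_abs_ln_left_profile_middle:
  assumes "a \<le> 30" "a' \<le> 30" "\<bar>a - a'\<bar> \<le> 1/4"
  shows "(\<lambda>x. \<bar>ln \<bar>left_profile x - a\<bar> - ln \<bar>left_profile x - a'\<bar>\<bar>) integrable_on {1/8..3/10} \<and>
         integral {1/8..3/10} (\<lambda>x. \<bar>ln \<bar>left_profile x - a\<bar> - ln \<bar>left_profile x - a'\<bar>\<bar>)
           \<le> 2 * \<bar>a - a'\<bar> * (1 - ln \<bar>a - a'\<bar>)"
proof -
  obtain p where p: "p \<in> {1/8..3/10}" "\<And>x. x \<in> {1/8<..3/10} \<Longrightarrow> 4 * \<bar>x - p\<bar> \<le> \<bar>left_profile x - a\<bar>"
    using left_profile_crossing assms(1) by blast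
  obtain p' where p': "p' \<in> {1/8..3/10}" "\<And>x. x \<in> {1/8<..3/10} \<Longrightarrow> 4 * \<bar>x - p'\<bar> \<le> \<bar>left_profile x - a'\<bar>"
    using left_profile_crossing assms(2) by blast
  show ?thesis
    by (rule integral_abs_ln_gap_le[OF left_profile_measurable _ _ assms(3) p(1) _ p'(1)])
       (use p(2) p'(2) in auto)
qed

lemma integral_ln_deriv_T_left:
  fixes a a' b b' c c' :: real
  assumes a: "0.4 \<le> a" "a \<le> 0.58" and a': "0.4 \<le> a'" "a' \<le> 0.58"
  shows "(\<lambda>x. \<bar>ln \<bar>deriv (T a b c) x\<bar> - ln \<bar>deriv (T a' b' c') x\<bar>\<bar>) integrable_on {0..3/10} \<and>
         integral {0..3/10} (\<lambda>x. \<bar>ln \<bar>deriv (T a b c) x\<bar> - ln \<bar>deriv (T a' b' c') x\<bar>\<bar>)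
           \<le> \<bar>a - a'\<bar> / 6 + 2 * \<bar>a - a'\<bar> * (1 - ln \<bar>a - a'\<bar>)"
proof -
  define G where "G x = \<bar>ln \<bar>left_profile x - a\<bar> - ln \<bar>left_profile x - a'\<bar>\<bar>" for x
  have "\<bar>a - a'\<bar> \<le> 1/4" using a a' by (auto simp: abs_if)
  then have G1: "G integrable_on {0..1/8}" "integral {0..1/8} G \<le> \<bar>a - a'\<bar> / 6"
    and G2: "G integrable_on {1/8..3/10}" "integral {1/8..3/10} G \<le> 2 * \<bar>a - a'\<bar> * (1 - ln \<bar>a - a'\<bar>)"
    using integral_abs_ln_left_profile_initial[of a a'] integral_abs_ln_left_profile_middle[of a a'] a a'
    unfolding G_def by auto
  have G: "G integrable_on {0..3/10}"
    by (rule Henstock_Kurzweil_Integration.integrable_combine[OF _ _ G1(1) G2(1)]) auto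
  have "integral {0..3/10} G = integral {0..1/8} G + integral {1/8..3/10} G"
    using Henstock_Kurzweil_Integration.integral_combine[OF _ _ G, of "1/8"] by simp
  define Z where "Z = {1/8, 3/10} \<union> {x \<in> {0..3/10}. left_profile x = a} \<union> {x \<in> {0..3/10}. left_profile x = a'}"
  have Z: "finite Z" unfolding Z_def using finite_left_profile_crossings a a' by simp
  let ?F = "\<lambda>x. \<bar>ln \<bar>deriv (T a b c) x\<bar> - ln \<bar>deriv (T a' b' c') x\<bar>\<bar>"
  have FG: "?F x = G x" if "x \<in> {0..3/10} - Z" for x
    using that ln_abs_deriv_T_left[of x a b c] ln_abs_deriv_T_left[of x a' b' c'] by (simp add: Z_def G_def)
  have "?F integrable_on {0..3/10}" by (rule integrable_spike_finite[OF Z _ G]) (use FG in auto)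
  moreover have "integral {0..3/10} ?F = integral {0..3/10} G"
    by (rule integral_spike[OF negligible_finite[OF Z]]) (use FG in auto)
  ultimately show ?thesis using G1(2) G2(2) \<open>integral {0..3/10} G = _\<close> by simp
qed

lemma has_integral_ln_deriv_T_right:
  fixes a a' b b' c c' :: real
  assumes "0 < c" "0 < c'"
  shows "((\<lambda>x. \<bar>ln \<bar>deriv (T a b c) x\<bar> - ln \<bar>deriv (T a' b' c') x\<bar>\<bar>)
           has_integral 7/10 * \<bar>ln c - ln c'\<bar>) {3/10..1}"
proof (rule has_integral_spike_finite[where S="{3/10}"])
  show "((\<lambda>x. \<bar>ln c - ln c'\<bar>) has_integral 7/10 * \<bar>ln c - ln c'\<bar>) {3/10..1::real}"
    using has_integral_const_real[of "\<bar>ln c - ln c'\<bar>" "3/10" "1::real"] by simp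
qed (use assms in \<open>auto simp: ln_abs_deriv_T_right\<close>)

theorem proposition62:
  fixes a a' b b' c c' :: real
  assumes "0.4 \<le> a" "a \<le> 0.58" "0.4 \<le> a'" "a' \<le> 0.58" "c > 0" "c' > 0"
  shows "(\<lambda>x. \<bar>ln \<bar>deriv (T a b c) x\<bar> - ln \<bar>deriv (T a' b' c') x\<bar>\<bar>) integrable_on {0..1} \<and>
         integral {0..1} (\<lambda>x. \<bar>ln \<bar>deriv (T a b c) x\<bar> - ln \<bar>deriv (T a' b' c') x\<bar>\<bar>)
           \<le> \<bar>a - a'\<bar> * (3 - 2 * ln \<bar>a - a'\<bar>) + 0.7 * \<bar>c - c'\<bar> / min c c'"
proof -
  let ?F = "\<lambda>x. \<bar>ln \<bar>deriv (T a b c) x\<bar> - ln \<bar>deriv (T a' b' c') x\<bar>\<bar>"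
  have left: "?F integrable_on {0..3/10}"
    "integral {0..3/10} ?F \<le> \<bar>a - a'\<bar> / 6 + 2 * \<bar>a - a'\<bar> * (1 - ln \<bar>a - a'\<bar>)"
    using integral_ln_deriv_T_left[OF assms(1-4)] by auto
  have right: "(?F has_integral 7/10 * \<bar>ln c - ln c'\<bar>) {3/10..1}"
    using has_integral_ln_deriv_T_right assms(5,6) by blast
  have F: "?F integrable_on {0..1}"
    using Henstock_Kurzweil_Integration.integrable_combine[OF _ _ left(1)] right by fastforce
  have "integral {0..1} ?F = integral {0..3/10} ?F + 7/10 * \<bar>ln c - ln c'\<bar>"
    using Henstock_Kurzweil_Integration.integral_combine[OF _ _ F, of "3/10"] integral_unique[OF right]
    by simp
  moreover have "\<bar>ln c - ln c'\<bar> \<le> \<bar>c - c'\<bar> / min c c'" using abs_ln_diff_le assms(5,6) by blast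
  moreover have "\<bar>a - a'\<bar> / 6 + 2 * \<bar>a - a'\<bar> * (1 - ln \<bar>a - a'\<bar>) \<le> \<bar>a - a'\<bar> * (3 - 2 * ln \<bar>a - a'\<bar>)"
    by (simp add: algebra_simps)
  ultimately show ?thesis using F left(2) by simp
qed

end
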